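(* Let $\succ$ be an admissible ordering on ground literals, extended to ground clauses by its multiset extension. Let $C_i = A_i \lor D_i$ ($1\le i\le n$) be ground clauses such that the atom $A_i$ is strictly $\succ$-maximal in $C_i$, and let $C=\neg A_1\lor\dots\lor\neg A_n\lor D$ be a ground clause. Consider the inference (SRes) with side premises $C_1,\dots,C_n$, main premise $C$ and conclusion $D_1\lor\dots\lor D_n\lor D$. Let $I\subseteq\{1,\dots,n\}$ be nonempty and let $C_p=\bigvee_{i\in I}D_i\lor\bigvee_{j\notin I}\neg A_j\lor D$ (the conclusion of the corresponding partial inference resolving only the literals $\neg A_i$, $i\in I$). Then for every set $N$ of ground clauses, the SRes inference above is redundant with respect to $N\cup\{C_p\}$.
   Context: An ordering $\succ$ on literals is admissible if it is well-founded and total on ground literals and liftable, $\neg A\succ A$ for every ground atom $A$, and $B\succ A$ implies $B\succ\neg A$ for ground atoms $A,B$. A literal $L$ is strictly $\succ$-maximal in a ground clause $C$ if $L\succ L'$ for every other literal occurrence $L'$ in $C$. For a set $N$ of ground clauses, a ground inference with side premises $C_1,\dots,C_n$, main premise $C$ and conclusion $E$ is redundant with respect to $N$ if there are finitely many clauses in $N$, each strictly smaller than $C$ (in the multiset extension of $\succ$), which together with $C_1,\dots,C_n$ logically entail $E$. *)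

theory Defs
  imports "HOL-Library.Multiset"
begin

datatype 'a lit = Pos 'a | Neg 'a

type_synonym 'a clause = "'a lit multiset"

fun true_lit :: "'a set \<Rightarrow> 'a lit \<Rightarrow> bool" where
  "true_lit J (Pos A) = (A \<in> J)"
| "true_lit J (Neg A) = (A \<notin> J)"

definition true_cls :: "'a set \<Rightarrow> 'a clause \<Rightarrow> bool" where
  "true_cls J C \<longleftrightarrow> (\<exists>L \<in># C. true_lit J L)"

definition entails :: "'a clause set \<Rightarrow> 'a clause \<Rightarrow> bool" where
  "entails S E \<longleftrightarrow> (\<forall>J. (\<forall>C \<in> S. true_cls J C) \<longrightarrow> true_cls J E)"

text \<open>gt L L' means L \<succ> L'.\<close>

definition admissible :: "('a lit \<Rightarrow> 'a lit \<Rightarrow> bool) \<Rightarrow> bool" where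
  "admissible gt \<longleftrightarrow>
     (\<forall>L. \<not> gt L L) \<and>
     (\<forall>L1 L2 L3. gt L1 L2 \<longrightarrow> gt L2 L3 \<longrightarrow> gt L1 L3) \<and>
     wfP (\<lambda>L L'. gt L' L) \<and>
     (\<forall>L L'. L \<noteq> L' \<longrightarrow> gt L L' \<or> gt L' L) \<and>
     (\<forall>A. gt (Neg A) (Pos A)) \<and>
     (\<forall>A B. gt (Pos B) (Pos A) \<longrightarrow> gt (Pos B) (Neg A))"

definition cls_less :: "('a lit \<Rightarrow> 'a lit \<Rightarrow> bool) \<Rightarrow> 'a clause \<Rightarrow> 'a clause \<Rightarrow> bool" where
  "cls_less gt C C' \<longleftrightarrow> (C, C') \<in> mult {(L, L'). gt L' L}"

definition strictly_max_in :: "('a lit \<Rightarrow> 'a lit \<Rightarrow> bool) \<Rightarrow> 'a lit \<Rightarrow> 'a clause \<Rightarrow> bool" where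
  "strictly_max_in gt L C \<longleftrightarrow> L \<in># C \<and> (\<forall>L' \<in># C - {#L#}. gt L L')"

definition redundant_inf ::
  "('a lit \<Rightarrow> 'a lit \<Rightarrow> bool) \<Rightarrow> 'a clause set \<Rightarrow> 'a clause set \<Rightarrow> 'a clause \<Rightarrow> 'a clause \<Rightarrow> bool" where
  "redundant_inf gt N Sides C E \<longleftrightarrow>
     (\<exists>M. finite M \<and> M \<subseteq> N \<and> (\<forall>C' \<in> M. cls_less gt C' C) \<and> entails (M \<union> Sides) E)"

end

theory Submission
  imports Defs
begin

text \<open>The partial conclusion C_p arises from the main premise by replacing the nonempty
  block of negative literals indexed by I with the D_i, each of which lies below its
  Neg (A i) by admissibility; so C_p is smaller than the main premise in the multiset
  ordering. Semantically, C_p together with the side premises still entails the full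
  conclusion: a remaining true literal Neg (A j) of C_p forces some literal of D_j to
  be true via the side premise A_j \<or> D_j.\<close>

lemma true_cls_empty [simp]: "\<not> true_cls J {#}"
  by (simp add: true_cls_def)

lemma true_cls_single [simp]: "true_cls J {#L#} \<longleftrightarrow> true_lit J L"
  by (simp add: true_cls_def)

lemma true_cls_plus [simp]: "true_cls J (C + C') \<longleftrightarrow> true_cls J C \<or> true_cls J C'"
  by (auto simp: true_cls_def)

lemma true_cls_add_mset [simp]: "true_cls J (add_mset L C) \<longleftrightarrow> true_lit J L \<or> true_cls J C"
  by (simp add: true_cls_def)

lemma true_cls_sum:
  "finite K \<Longrightarrow> true_cls J (\<Sum>i\<in>K. C i) \<longleftrightarrow> (\<exists>i\<in>K. true_cls J (C i))"
  by (induction K rule: finite_induct) auto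

lemma cls_less_if_dominated:
  assumes "X \<noteq> {#}" and "\<forall>L \<in># Y. \<exists>L' \<in># X. gt L' L"
  shows "cls_less gt (Y + Z) (X + Z)"
  using one_step_implies_mult[of X Y "{(L, L'). gt L' L}" Z] assms
  by (simp add: cls_less_def ac_simps)

lemma admissible_Neg_gt_side_literal:
  assumes "admissible gt" and "strictly_max_in gt (Pos A) (add_mset (Pos A) C)"
    and "L \<in># C"
  shows "gt (Neg A) L"
proof -
  have "gt (Pos A) L"
    using assms(2,3) by (simp add: strictly_max_in_def)
  moreover have "gt (Neg A) (Pos A)" and "\<And>L1 L2 L3. gt L1 L2 \<Longrightarrow> gt L2 L3 \<Longrightarrow> gt L1 L3"
    using assms(1) by (auto simp: admissible_def)
  ultimately show ?thesis by blast
qed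

lemma partial_resolvent_less:
  assumes adm: "admissible gt"
    and maxi: "\<forall>i \<in> K. strictly_max_in gt (Pos (A i)) (add_mset (Pos (A i)) (Dc i))"
    and "finite K" and "I \<subseteq> K" and "I \<noteq> {}"
  shows "cls_less gt ((\<Sum>i\<in>I. Dc i) + (\<Sum>j\<in>K - I. {#Neg (A j)#}) + D)
                     ((\<Sum>i\<in>K. {#Neg (A i)#}) + D)"
proof -
  have "finite I" using assms(3,4) finite_subset by blast
  have main_split: "(\<Sum>i\<in>K. {#Neg (A i)#}) + D
      = (\<Sum>i\<in>I. {#Neg (A i)#}) + ((\<Sum>j\<in>K - I. {#Neg (A j)#}) + D)"
    using sum.subset_diff[OF \<open>I \<subseteq> K\<close> \<open>finite K\<close>, of "\<lambda>i. {#Neg (A i)#}"]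
    by (simp add: ac_simps)
  have "(\<Sum>i\<in>I. {#Neg (A i)#}) \<noteq> {#}"
    using \<open>I \<noteq> {}\<close> by (simp add: set_mset_sum[OF \<open>finite I\<close>] flip: set_mset_eq_empty_iff)
  moreover have "\<forall>L \<in># (\<Sum>i\<in>I. Dc i). \<exists>L' \<in># (\<Sum>i\<in>I. {#Neg (A i)#}). gt L' L"
    using admissible_Neg_gt_side_literal[OF adm] maxi \<open>I \<subseteq> K\<close>
    by (fastforce simp: set_mset_sum[OF \<open>finite I\<close>])
  ultimately show ?thesis
    unfolding main_split add.assoc by (rule cls_less_if_dominated)
qed

lemma partial_resolvent_entails_resolvent:
  assumes "finite K" and "I \<subseteq> K"
  shows "entails (insert ((\<Sum>i\<in>I. Dc i) + (\<Sum>j\<in>K - I. {#Neg (A j)#}) + D)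
                         ((\<lambda>i. add_mset (Pos (A i)) (Dc i)) ` K))
                 ((\<Sum>i\<in>K. Dc i) + D)"
  unfolding entails_def
proof (intro allI impI)
  fix J
  assume models: "\<forall>C \<in> insert ((\<Sum>i\<in>I. Dc i) + (\<Sum>j\<in>K - I. {#Neg (A j)#}) + D)
                              ((\<lambda>i. add_mset (Pos (A i)) (Dc i)) ` K). true_cls J C"
  have "finite I" using assms finite_subset by blast
  have side: "\<And>j. j \<in> K \<Longrightarrow> A j \<notin> J \<Longrightarrow> true_cls J (Dc j)"
    using models by auto
  from models consider
      (resolved) i where "i \<in> I" "true_cls J (Dc i)"
    | (remaining) j where "j \<in> K - I" "A j \<notin> J"
    | (rest) "true_cls J D"
    by (auto simp: true_cls_sum[OF \<open>finite I\<close>] true_cls_sum[OF finite_Diff[OF assms(1)]])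
  then show "true_cls J ((\<Sum>i\<in>K. Dc i) + D)"
    by cases (use assms side in \<open>auto simp: true_cls_sum\<close>)
qed

theorem mainTheorem2:
  fixes gt :: "'a lit \<Rightarrow> 'a lit \<Rightarrow> bool"
    and n :: nat and A :: "nat \<Rightarrow> 'a" and Dc :: "nat \<Rightarrow> 'a clause"
    and D :: "'a clause" and I :: "nat set" and N :: "'a clause set"
  assumes adm: "admissible gt"
    and maxi: "\<forall>i \<in> {1..n}. strictly_max_in gt (Pos (A i)) (add_mset (Pos (A i)) (Dc i))"
    and I_sub: "I \<subseteq> {1..n}" and I_ne: "I \<noteq> {}"
  shows "redundant_inf gt
           (N \<union> {(\<Sum>i\<in>I. Dc i) + (\<Sum>j\<in>{1..n} - I. {#Neg (A j)#}) + D})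
           ((\<lambda>i. add_mset (Pos (A i)) (Dc i)) ` {1..n})
           ((\<Sum>i\<in>{1..n}. {#Neg (A i)#}) + D)
           ((\<Sum>i\<in>{1..n}. Dc i) + D)"
proof -
  let ?Cp = "(\<Sum>i\<in>I. Dc i) + (\<Sum>j\<in>{1..n} - I. {#Neg (A j)#}) + D"
  have "cls_less gt ?Cp ((\<Sum>i\<in>{1..n}. {#Neg (A i)#}) + D)"
    using partial_resolvent_less[OF adm maxi _ I_sub I_ne] by simp
  moreover have "entails ({?Cp} \<union> (\<lambda>i. add_mset (Pos (A i)) (Dc i)) ` {1..n})
                         ((\<Sum>i\<in>{1..n}. Dc i) + D)"
    using partial_resolvent_entails_resolvent[OF _ I_sub] by simp
  ultimately show ?thesis
    unfolding redundant_inf_def by (intro exI[of _ "{?Cp}"]) auto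
qed

end
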